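(* Let $M$ and $M'$ be end-decisive MM-QFAs that accept $L$ and $L'$ respectively with bounded positive one-sided error. Then there exists an end-decisive MM-QFA that accepts $L\cap L'$ with bounded positive one-sided error.
   Context: A measure-many quantum finite automaton (MM-QFA) over $\Sigma$ is a tuple $(Q,\Sigma,\{U_\sigma\}_{\sigma\in\Sigma\cup\{\$\}},q_0,Q_{acc},Q_{rej})$ with $Q$ finite indexing an orthonormal basis of $\mathbb{C}^Q$, end-marker $\$\notin\Sigma$, unitary $U_\sigma$, initial state $q_0$, and $Q$ partitioned into $Q_{acc},Q_{rej},Q_{non}$ with orthogonal projections $P_{acc},P_{rej},P_{non}$. On input $x$ it processes $x\$$ maintaining $(\psi,p_{acc},p_{rej})$, initially $(|q_0\rangle,0,0)$; on reading $\sigma$: $\psi'=U_\sigma\psi$, $p_{acc}\mathrel{+}=\|P_{acc}\psi'\|^2$, $p_{rej}\mathrel{+}=\|P_{rej}\psi'\|^2$, $\psi\leftarrow P_{non}\psi'$; the acceptance probability $p(x)$ is the final $p_{acc}$. It is end-decisive if $P_{acc}\psi'=0$ after reading every non-end-marker symbol, on every input. It accepts $L$ with bounded positive one-sided error if there is $c>0$ with $p(x)>c$ for all $x\in L$ and $p(x)=0$ for all $x\notin L$. *)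

theory Defs
  imports Complex_Main "Jordan_Normal_Form.Matrix"
begin

text \<open>The state set Q is represented by the
index set {0..<qdim}; the state space C^Q is the space of complex vectors of
dimension qdim (Jordan_Normal_Form vectors), the basis vector of state q being
unit_vec qdim q. The unitary for a symbol a of the input alphabet is qtrans a,
the unitary for the end-marker is qend. Q_acc and Q_rej are qacc and qrej;
Q_non is the rest of {0..<qdim}.\<close>

record 'a mmqfa =
  qdim :: nat
  qtrans :: "'a \<Rightarrow> complex mat"
  qend :: "complex mat"
  qinit :: nat
  qacc :: "nat set"
  qrej :: "nat set"

definition adjoint_mat :: "complex mat \<Rightarrow> complex mat" where
  "adjoint_mat A = mat (dim_col A) (dim_row A) (\<lambda>(i,j). cnj (A $$ (j,i)))"

definition unitary_mat :: "nat \<Rightarrow> complex mat \<Rightarrow> bool" where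
  "unitary_mat n U \<longleftrightarrow> U \<in> carrier_mat n n \<and> adjoint_mat U * U = 1\<^sub>m n \<and> U * adjoint_mat U = 1\<^sub>m n"

definition mmqfa_wf :: "'a set \<Rightarrow> 'a mmqfa \<Rightarrow> bool" where
  "mmqfa_wf Sig M \<longleftrightarrow>
     qinit M < qdim M \<and>
     qacc M \<subseteq> {..<qdim M} \<and> qrej M \<subseteq> {..<qdim M} \<and> qacc M \<inter> qrej M = {} \<and>
     (\<forall>a\<in>Sig. unitary_mat (qdim M) (qtrans M a)) \<and>
     unitary_mat (qdim M) (qend M)"

definition qnon :: "'a mmqfa \<Rightarrow> nat set" where
  "qnon M = {..<qdim M} - qacc M - qrej M"

definition proj :: "nat set \<Rightarrow> complex vec \<Rightarrow> complex vec" where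
  "proj S v = vec (dim_vec v) (\<lambda>i. if i \<in> S then v $ i else 0)"

definition sqnorm :: "complex vec \<Rightarrow> real" where
  "sqnorm v = (\<Sum>i<dim_vec v. (cmod (v $ i))\<^sup>2)"

definition qstep :: "'a mmqfa \<Rightarrow> complex mat \<Rightarrow> complex vec \<times> real \<times> real \<Rightarrow> complex vec \<times> real \<times> real" where
  "qstep M U st = (case st of (psi, pa, pr) \<Rightarrow>
      let psi' = U *\<^sub>v psi in
      (proj (qnon M) psi', pa + sqnorm (proj (qacc M) psi'), pr + sqnorm (proj (qrej M) psi')))"

definition init_config :: "'a mmqfa \<Rightarrow> complex vec \<times> real \<times> real" where
  "init_config M = (unit_vec (qdim M) (qinit M), 0, 0)"

definition run :: "'a mmqfa \<Rightarrow> 'a list \<Rightarrow> complex vec \<times> real \<times> real" where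
  "run M x = fold (\<lambda>a st. qstep M (qtrans M a) st) x (init_config M)"

definition acc_prob :: "'a mmqfa \<Rightarrow> 'a list \<Rightarrow> real" where
  "acc_prob M x = fst (snd (qstep M (qend M) (run M x)))"

definition end_decisive :: "'a set \<Rightarrow> 'a mmqfa \<Rightarrow> bool" where
  "end_decisive Sig M \<longleftrightarrow>
     (\<forall>x\<in>lists Sig. \<forall>a\<in>Sig.
        proj (qacc M) (qtrans M a *\<^sub>v fst (run M x)) = 0\<^sub>v (qdim M))"

definition accepts_bpos :: "'a set \<Rightarrow> 'a mmqfa \<Rightarrow> 'a list set \<Rightarrow> bool" where
  "accepts_bpos Sig M L \<longleftrightarrow>
     (\<exists>c>0. (\<forall>x\<in>lists Sig. x \<in> L \<longrightarrow> acc_prob M x > c) \<and>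
            (\<forall>x\<in>lists Sig. x \<notin> L \<longrightarrow> acc_prob M x = 0))"

end

theory Submission
  imports Defs
begin

(* Run M and M' in parallel on the tensor product of their state spaces, with unitaries
   U \<otimes> U'. A product basis state keeps running only while both components do, so the
   non-halting part of the product state after reading x is exactly \<psi> \<otimes> \<psi>', where \<psi> and
   \<psi>' are the non-halting parts for M and M'. End-decisive automata accept only on the
   end-marker; accepting on it exactly when both components accept gives
   p(x) = p_M(x) * p_M'(x), which vanishes off L \<inter> L' and exceeds c * c' on it. *)

lemma mult_add_less_mult:
  fixes i j m n :: nat
  assumes "i < n" "j < m"
  shows "i * m + j < n * m"
proof -
  have "i * m + j < Suc i * m" using assms(2) by simp
  also have "\<dots> \<le> n * m" using assms(1) by (intro mult_right_mono) auto
  finally show ?thesis .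
qed

lemma mod_less_of_less_mult:
  fixes k m n :: nat
  shows "k < n * m \<Longrightarrow> k mod m < m"
  by (cases "m = 0") auto

lemma sum_div_mod_eq_double_sum:
  fixes f :: "nat \<Rightarrow> nat \<Rightarrow> 'b::comm_monoid_add"
  shows "(\<Sum>k<n * m. f (k div m) (k mod m)) = (\<Sum>i<n. \<Sum>j<m. f i j)"
proof -
  have "(\<Sum>k<n * m. f (k div m) (k mod m)) = (\<Sum>(i, j)\<in>{..<n} \<times> {..<m}. f i j)"
    by (rule sum.reindex_bij_witness[where i = "\<lambda>(i, j). i * m + j" and j = "\<lambda>k. (k div m, k mod m)"])
      (auto simp: less_mult_imp_div_less mod_less_of_less_mult mult_add_less_mult)
  then show ?thesis by (simp add: sum.cartesian_product)
qed

definition kron_mat :: "'a::times mat \<Rightarrow> 'a mat \<Rightarrow> 'a mat" where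
  "kron_mat A B = mat (dim_row A * dim_row B) (dim_col A * dim_col B)
     (\<lambda>(i, j). A $$ (i div dim_row B, j div dim_col B) * B $$ (i mod dim_row B, j mod dim_col B))"

definition kron_vec :: "'a::times vec \<Rightarrow> 'a vec \<Rightarrow> 'a vec" where
  "kron_vec v w = vec (dim_vec v * dim_vec w) (\<lambda>k. v $ (k div dim_vec w) * w $ (k mod dim_vec w))"

lemma dim_kron_mat [simp]:
  "dim_row (kron_mat A B) = dim_row A * dim_row B"
  "dim_col (kron_mat A B) = dim_col A * dim_col B"
  by (simp_all add: kron_mat_def)

lemma kron_mat_carrier:
  "A \<in> carrier_mat n m \<Longrightarrow> B \<in> carrier_mat n' m' \<Longrightarrow> kron_mat A B \<in> carrier_mat (n * n') (m * m')"
  by (auto intro!: carrier_matI)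

lemma index_kron_mat:
  assumes "i < dim_row A * dim_row B" "j < dim_col A * dim_col B"
  shows "kron_mat A B $$ (i, j) =
    A $$ (i div dim_row B, j div dim_col B) * B $$ (i mod dim_row B, j mod dim_col B)"
  using assms by (simp add: kron_mat_def)

lemma dim_kron_vec [simp]: "dim_vec (kron_vec v w) = dim_vec v * dim_vec w"
  by (simp add: kron_vec_def)

lemma index_kron_vec:
  "k < dim_vec v * dim_vec w \<Longrightarrow> kron_vec v w $ k = v $ (k div dim_vec w) * w $ (k mod dim_vec w)"
  by (simp add: kron_vec_def)

lemma kron_mat_mult_kron_vec:
  fixes A B :: "'a::comm_semiring_0 mat"
  assumes "dim_col A = dim_vec v" "dim_col B = dim_vec w"
  shows "kron_mat A B *\<^sub>v kron_vec v w = kron_vec (A *\<^sub>v v) (B *\<^sub>v w)"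
proof (rule eq_vecI)
  fix k assume "k < dim_vec (kron_vec (A *\<^sub>v v) (B *\<^sub>v w))"
  then have k: "k < dim_row A * dim_row B" by simp
  let ?r = "k div dim_row B" and ?s = "k mod dim_row B"
  have "(kron_mat A B *\<^sub>v kron_vec v w) $ k
      = (\<Sum>t<dim_vec v * dim_vec w. A $$ (?r, t div dim_vec w) * B $$ (?s, t mod dim_vec w)
           * (v $ (t div dim_vec w) * w $ (t mod dim_vec w)))"
    using assms k by (simp add: mult_mat_vec_def scalar_prod_def atLeast0LessThan index_kron_mat
        index_kron_vec less_mult_imp_div_less mod_less_of_less_mult)
  also have "\<dots> = (\<Sum>i<dim_vec v. \<Sum>j<dim_vec w. A $$ (?r, i) * B $$ (?s, j) * (v $ i * w $ j))"
    by (rule sum_div_mod_eq_double_sum)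
  also have "\<dots> = (\<Sum>i<dim_vec v. A $$ (?r, i) * v $ i) * (\<Sum>j<dim_vec w. B $$ (?s, j) * w $ j)"
    by (simp add: sum_product algebra_simps)
  also have "\<dots> = kron_vec (A *\<^sub>v v) (B *\<^sub>v w) $ k"
    using assms k by (simp add: index_kron_vec mult_mat_vec_def scalar_prod_def atLeast0LessThan
        less_mult_imp_div_less mod_less_of_less_mult)
  finally show "(kron_mat A B *\<^sub>v kron_vec v w) $ k = kron_vec (A *\<^sub>v v) (B *\<^sub>v w) $ k" .
qed simp

lemma kron_mat_mult:
  fixes A B C D :: "'a::comm_semiring_0 mat"
  assumes "dim_col A = dim_row C" "dim_col B = dim_row D"
  shows "kron_mat A B * kron_mat C D = kron_mat (A * C) (B * D)"
proof (rule eq_matI)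
  fix i j assume "i < dim_row (kron_mat (A * C) (B * D))" "j < dim_col (kron_mat (A * C) (B * D))"
  then have i: "i < dim_row A * dim_row B" and j: "j < dim_col C * dim_col D" by simp_all
  let ?r = "i div dim_row B" and ?s = "i mod dim_row B"
  let ?p = "j div dim_col D" and ?q = "j mod dim_col D"
  have "(kron_mat A B * kron_mat C D) $$ (i, j)
      = (\<Sum>t<dim_row C * dim_row D. A $$ (?r, t div dim_row D) * B $$ (?s, t mod dim_row D)
           * (C $$ (t div dim_row D, ?p) * D $$ (t mod dim_row D, ?q)))"
    using assms i j by (simp add: times_mat_def scalar_prod_def atLeast0LessThan index_kron_mat
        less_mult_imp_div_less mod_less_of_less_mult)
  also have "\<dots> = (\<Sum>a<dim_row C. \<Sum>b<dim_row D. A $$ (?r, a) * B $$ (?s, b) * (C $$ (a, ?p) * D $$ (b, ?q)))"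
    by (rule sum_div_mod_eq_double_sum)
  also have "\<dots> = (\<Sum>a<dim_row C. A $$ (?r, a) * C $$ (a, ?p)) * (\<Sum>b<dim_row D. B $$ (?s, b) * D $$ (b, ?q))"
    by (simp add: sum_product algebra_simps)
  also have "\<dots> = kron_mat (A * C) (B * D) $$ (i, j)"
    using assms i j by (simp add: times_mat_def scalar_prod_def atLeast0LessThan index_kron_mat
        less_mult_imp_div_less mod_less_of_less_mult)
  finally show "(kron_mat A B * kron_mat C D) $$ (i, j) = kron_mat (A * C) (B * D) $$ (i, j)" .
qed simp_all

lemma kron_mat_one: "kron_mat (1\<^sub>m n) (1\<^sub>m m) = (1\<^sub>m (n * m) :: 'a::semiring_1 mat)"
proof (rule eq_matI)
  fix i j assume "i < dim_row (1\<^sub>m (n * m) :: 'a mat)" "j < dim_col (1\<^sub>m (n * m) :: 'a mat)"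
  then have i: "i < n * m" and j: "j < n * m" by simp_all
  have "(i div m = j div m \<and> i mod m = j mod m) \<longleftrightarrow> i = j"
    by (metis div_mult_mod_eq)
  then show "kron_mat (1\<^sub>m n) (1\<^sub>m m) $$ (i, j) = (1\<^sub>m (n * m) :: 'a mat) $$ (i, j)"
    using i j by (auto simp: index_kron_mat less_mult_imp_div_less mod_less_of_less_mult)
qed simp_all

lemma adjoint_kron_mat: "adjoint_mat (kron_mat A B) = kron_mat (adjoint_mat A) (adjoint_mat B)"
  by (rule eq_matI)
    (simp_all add: adjoint_mat_def index_kron_mat less_mult_imp_div_less mod_less_of_less_mult)

lemma carrier_adjoint_mat: "A \<in> carrier_mat n m \<Longrightarrow> adjoint_mat A \<in> carrier_mat m n"
  by (simp add: adjoint_mat_def)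

lemma unitary_kron_mat:
  assumes "unitary_mat n A" "unitary_mat m B"
  shows "unitary_mat (n * m) (kron_mat A B)"
proof -
  have A: "A \<in> carrier_mat n n" and B: "B \<in> carrier_mat m m"
    using assms by (simp_all add: unitary_mat_def)
  then have A': "adjoint_mat A \<in> carrier_mat n n" and B': "adjoint_mat B \<in> carrier_mat m m"
    by (simp_all add: carrier_adjoint_mat)
  have "adjoint_mat (kron_mat A B) * kron_mat A B = kron_mat (adjoint_mat A * A) (adjoint_mat B * B)"
    using A B A' B' by (simp add: adjoint_kron_mat kron_mat_mult)
  moreover have "kron_mat A B * adjoint_mat (kron_mat A B) = kron_mat (A * adjoint_mat A) (B * adjoint_mat B)"
    using A B A' B' by (simp add: adjoint_kron_mat kron_mat_mult)
  moreover have "kron_mat A B \<in> carrier_mat (n * m) (n * m)"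
    using A B by (rule kron_mat_carrier)
  ultimately show ?thesis
    using assms by (simp add: unitary_mat_def kron_mat_one)
qed

lemma proj_kron_vec:
  assumes "\<And>k. k < dim_vec v * dim_vec w \<Longrightarrow> k \<in> S \<longleftrightarrow> k div dim_vec w \<in> A \<and> k mod dim_vec w \<in> B"
  shows "proj S (kron_vec v w) = kron_vec (proj A v) (proj B w)"
  using assms
  by (intro eq_vecI) (auto simp: proj_def index_kron_vec less_mult_imp_div_less mod_less_of_less_mult)

lemma proj_kron_mat_mult_kron_vec:
  fixes U U' :: "complex mat"
  assumes "U \<in> carrier_mat n n'" "U' \<in> carrier_mat m m'" "dim_vec v = n'" "dim_vec w = m'"
  shows "proj {k. k < n * m \<and> k div m \<in> A \<and> k mod m \<in> B} (kron_mat U U' *\<^sub>v kron_vec v w)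
       = kron_vec (proj A (U *\<^sub>v v)) (proj B (U' *\<^sub>v w))"
proof -
  have mult: "kron_mat U U' *\<^sub>v kron_vec v w = kron_vec (U *\<^sub>v v) (U' *\<^sub>v w)"
    using assms by (simp add: kron_mat_mult_kron_vec)
  have "dim_vec (U *\<^sub>v v) = n" "dim_vec (U' *\<^sub>v w) = m"
    using assms by simp_all
  then have "proj {k. k < n * m \<and> k div m \<in> A \<and> k mod m \<in> B} (kron_vec (U *\<^sub>v v) (U' *\<^sub>v w))
      = kron_vec (proj A (U *\<^sub>v v)) (proj B (U' *\<^sub>v w))"
    by (intro proj_kron_vec) auto
  with mult show ?thesis by simp
qed

lemma sqnorm_kron_vec: "sqnorm (kron_vec v w) = sqnorm v * sqnorm w"
  unfolding sqnorm_def
  by (simp add: index_kron_vec sum_div_mod_eq_double_sum[where f = "\<lambda>i j. (cmod (v $ i))\<^sup>2 * (cmod (w $ j))\<^sup>2"]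
      norm_mult power_mult_distrib sum_product)

lemma kron_vec_zero_left: "kron_vec (0\<^sub>v n) (w :: 'a::mult_zero vec) = 0\<^sub>v (n * dim_vec w)"
  by (rule eq_vecI) (simp_all add: index_kron_vec less_mult_imp_div_less)

lemma unit_vec_kron_vec:
  assumes "q < n" "q' < m"
  shows "unit_vec (n * m) (q * m + q') = (kron_vec (unit_vec n q) (unit_vec m q') :: 'a::semiring_1 vec)"
    (is "?u = ?v")
proof (rule eq_vecI)
  fix k assume "k < dim_vec ?v"
  then have k: "k < n * m" by simp
  have "k = q * m + q' \<longleftrightarrow> k div m = q \<and> k mod m = q'"
    using assms(2) by auto
  then have "?u $ k = (if k div m = q \<and> k mod m = q' then 1 else 0)"
    using k by (simp add: unit_vec_def)
  also have "\<dots> = ?v $ k"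
    using k by (simp add: index_kron_vec unit_vec_def less_mult_imp_div_less mod_less_of_less_mult)
  finally show "?u $ k = ?v $ k" .
qed simp

lemma fst_qstep: "fst (qstep M U st) = proj (qnon M) (U *\<^sub>v fst st)"
  by (cases st) (simp add: qstep_def Let_def)

lemma acc_qstep: "fst (snd (qstep M U st)) = fst (snd st) + sqnorm (proj (qacc M) (U *\<^sub>v fst st))"
  by (cases st) (simp add: qstep_def Let_def)

lemma run_Nil: "run M [] = init_config M"
  by (simp add: run_def)

lemma run_snoc: "run M (xs @ [a]) = qstep M (qtrans M a) (run M xs)"
  by (simp add: run_def)

lemma qtrans_carrier: "mmqfa_wf Sig M \<Longrightarrow> a \<in> Sig \<Longrightarrow> qtrans M a \<in> carrier_mat (qdim M) (qdim M)"
  by (simp add: mmqfa_wf_def unitary_mat_def)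

lemma qend_carrier: "mmqfa_wf Sig M \<Longrightarrow> qend M \<in> carrier_mat (qdim M) (qdim M)"
  by (simp add: mmqfa_wf_def unitary_mat_def)

lemma dim_run:
  assumes "mmqfa_wf Sig M" "x \<in> lists Sig"
  shows "dim_vec (fst (run M x)) = qdim M"
proof (cases x rule: rev_cases)
  case Nil
  then show ?thesis by (simp add: run_Nil init_config_def)
next
  case (snoc xs a)
  then have "qtrans M a \<in> carrier_mat (qdim M) (qdim M)"
    using assms by (simp add: qtrans_carrier)
  with snoc show ?thesis by (simp add: run_snoc fst_qstep proj_def)
qed

lemma acc_run_end_decisive:
  assumes "end_decisive Sig M" "x \<in> lists Sig"
  shows "fst (snd (run M x)) = 0"
  using assms(2)
proof (induction x rule: rev_induct)
  case Nil
  then show ?case by (simp add: run_Nil init_config_def)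
next
  case (snoc a xs)
  then have "proj (qacc M) (qtrans M a *\<^sub>v fst (run M xs)) = 0\<^sub>v (qdim M)"
    using assms(1) by (simp add: end_decisive_def)
  with snoc show ?case by (simp add: run_snoc acc_qstep sqnorm_def)
qed

lemma acc_prob_end_decisive:
  assumes "end_decisive Sig M" "x \<in> lists Sig"
  shows "acc_prob M x = sqnorm (proj (qacc M) (qend M *\<^sub>v fst (run M x)))"
  using acc_run_end_decisive[OF assms] by (simp add: acc_prob_def acc_qstep)

(* The product state (q, q') has index q * qdim M' + q'; it halts as soon as one component
   halts, and it accepts only if both accept. *)
definition tensor_mmqfa :: "'a mmqfa \<Rightarrow> 'a mmqfa \<Rightarrow> 'a mmqfa" where
  "tensor_mmqfa M M' = \<lparr>qdim = qdim M * qdim M',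
     qtrans = (\<lambda>a. kron_mat (qtrans M a) (qtrans M' a)),
     qend = kron_mat (qend M) (qend M'),
     qinit = qinit M * qdim M' + qinit M',
     qacc = {k. k < qdim M * qdim M' \<and> k div qdim M' \<in> qacc M \<and> k mod qdim M' \<in> qacc M'},
     qrej = {k. k < qdim M * qdim M' \<and> \<not> (k div qdim M' \<in> qnon M \<and> k mod qdim M' \<in> qnon M')
              \<and> \<not> (k div qdim M' \<in> qacc M \<and> k mod qdim M' \<in> qacc M')}\<rparr>"

lemma tensor_mmqfa_sel [simp]:
  "qdim (tensor_mmqfa M M') = qdim M * qdim M'"
  "qtrans (tensor_mmqfa M M') a = kron_mat (qtrans M a) (qtrans M' a)"
  "qend (tensor_mmqfa M M') = kron_mat (qend M) (qend M')"
  "qinit (tensor_mmqfa M M') = qinit M * qdim M' + qinit M'"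
  "qacc (tensor_mmqfa M M') =
     {k. k < qdim M * qdim M' \<and> k div qdim M' \<in> qacc M \<and> k mod qdim M' \<in> qacc M'}"
  by (simp_all add: tensor_mmqfa_def)

lemma qnon_tensor_mmqfa:
  "qnon (tensor_mmqfa M M') =
     {k. k < qdim M * qdim M' \<and> k div qdim M' \<in> qnon M \<and> k mod qdim M' \<in> qnon M'}"
  by (auto simp: qnon_def tensor_mmqfa_def)

lemma mmqfa_wf_tensor_mmqfa:
  assumes "mmqfa_wf Sig M" "mmqfa_wf Sig M'"
  shows "mmqfa_wf Sig (tensor_mmqfa M M')"
proof -
  have "qinit M * qdim M' + qinit M' < qdim M * qdim M'"
    using assms by (simp add: mmqfa_wf_def mult_add_less_mult)
  then show ?thesis
    using assms unfolding mmqfa_wf_def by (auto simp: tensor_mmqfa_def qnon_def intro!: unitary_kron_mat)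
qed

lemma run_tensor_mmqfa:
  assumes "mmqfa_wf Sig M" "mmqfa_wf Sig M'" "x \<in> lists Sig"
  shows "fst (run (tensor_mmqfa M M') x) = kron_vec (fst (run M x)) (fst (run M' x))"
  using assms(3)
proof (induction x rule: rev_induct)
  case Nil
  have "qinit M < qdim M" "qinit M' < qdim M'"
    using assms(1,2) by (simp_all add: mmqfa_wf_def)
  then show ?case
    by (simp add: run_Nil init_config_def unit_vec_kron_vec)
next
  case (snoc a xs)
  then have xs: "xs \<in> lists Sig" and a: "a \<in> Sig" by simp_all
  let ?\<psi> = "fst (run M xs)" and ?\<psi>' = "fst (run M' xs)"
  have "fst (run (tensor_mmqfa M M') (xs @ [a]))
      = proj (qnon (tensor_mmqfa M M')) (kron_mat (qtrans M a) (qtrans M' a) *\<^sub>v kron_vec ?\<psi> ?\<psi>')"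
    using snoc.IH xs by (simp add: run_snoc fst_qstep)
  also have "\<dots> = kron_vec (proj (qnon M) (qtrans M a *\<^sub>v ?\<psi>)) (proj (qnon M') (qtrans M' a *\<^sub>v ?\<psi>'))"
    unfolding qnon_tensor_mmqfa
    using qtrans_carrier[OF assms(1) a] qtrans_carrier[OF assms(2) a]
      dim_run[OF assms(1) xs] dim_run[OF assms(2) xs]
    by (rule proj_kron_mat_mult_kron_vec)
  also have "\<dots> = kron_vec (fst (run M (xs @ [a]))) (fst (run M' (xs @ [a])))"
    by (simp add: run_snoc fst_qstep)
  finally show ?case .
qed

lemma end_decisive_tensor_mmqfa:
  assumes "mmqfa_wf Sig M" "mmqfa_wf Sig M'" "end_decisive Sig M"
  shows "end_decisive Sig (tensor_mmqfa M M')"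
  unfolding end_decisive_def
proof (intro ballI)
  fix x a assume x: "x \<in> lists Sig" and a: "a \<in> Sig"
  let ?N = "tensor_mmqfa M M'" and ?\<psi> = "fst (run M x)" and ?\<psi>' = "fst (run M' x)"
  have U: "qtrans M a \<in> carrier_mat (qdim M) (qdim M)" "qtrans M' a \<in> carrier_mat (qdim M') (qdim M')"
    using qtrans_carrier[OF assms(1) a] qtrans_carrier[OF assms(2) a] .
  have "proj (qacc ?N) (qtrans ?N a *\<^sub>v fst (run ?N x))
      = kron_vec (proj (qacc M) (qtrans M a *\<^sub>v ?\<psi>)) (proj (qacc M') (qtrans M' a *\<^sub>v ?\<psi>'))"
    using run_tensor_mmqfa[OF assms(1,2) x] U dim_run[OF assms(1) x] dim_run[OF assms(2) x]
    by (simp add: proj_kron_mat_mult_kron_vec)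
  also have "\<dots> = kron_vec (0\<^sub>v (qdim M)) (proj (qacc M') (qtrans M' a *\<^sub>v ?\<psi>'))"
    using assms(3) x a by (simp add: end_decisive_def)
  also have "\<dots> = 0\<^sub>v (qdim ?N)"
    using U by (simp add: kron_vec_zero_left proj_def)
  finally show "proj (qacc ?N) (qtrans ?N a *\<^sub>v fst (run ?N x)) = 0\<^sub>v (qdim ?N)" .
qed

lemma acc_prob_tensor_mmqfa:
  assumes "mmqfa_wf Sig M" "mmqfa_wf Sig M'" "end_decisive Sig M" "end_decisive Sig M'"
    and "x \<in> lists Sig"
  shows "acc_prob (tensor_mmqfa M M') x = acc_prob M x * acc_prob M' x"
proof -
  let ?N = "tensor_mmqfa M M'" and ?\<psi> = "fst (run M x)" and ?\<psi>' = "fst (run M' x)"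
  have "acc_prob ?N x = sqnorm (proj (qacc ?N) (qend ?N *\<^sub>v fst (run ?N x)))"
    using end_decisive_tensor_mmqfa[OF assms(1-3)] assms(5) by (rule acc_prob_end_decisive)
  also have "\<dots> = sqnorm (kron_vec (proj (qacc M) (qend M *\<^sub>v ?\<psi>)) (proj (qacc M') (qend M' *\<^sub>v ?\<psi>')))"
    using run_tensor_mmqfa[OF assms(1,2,5)] qend_carrier[OF assms(1)] qend_carrier[OF assms(2)]
      dim_run[OF assms(1,5)] dim_run[OF assms(2,5)]
    by (simp add: proj_kron_mat_mult_kron_vec)
  also have "\<dots> = acc_prob M x * acc_prob M' x"
    by (simp add: sqnorm_kron_vec acc_prob_end_decisive[OF assms(3,5)] acc_prob_end_decisive[OF assms(4,5)])
  finally show ?thesis .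
qed

lemma accepts_bpos_Int_if_acc_prob_mult:
  assumes "accepts_bpos Sig M L" "accepts_bpos Sig M' L'"
    and "\<And>x. x \<in> lists Sig \<Longrightarrow> acc_prob N x = acc_prob M x * acc_prob M' x"
  shows "accepts_bpos Sig N (L \<inter> L')"
proof -
  obtain c where c: "c > 0" "\<forall>x\<in>lists Sig. x \<in> L \<longrightarrow> acc_prob M x > c"
      "\<forall>x\<in>lists Sig. x \<notin> L \<longrightarrow> acc_prob M x = 0"
    using assms(1) unfolding accepts_bpos_def by blast
  obtain c' where c': "c' > 0" "\<forall>x\<in>lists Sig. x \<in> L' \<longrightarrow> acc_prob M' x > c'"
      "\<forall>x\<in>lists Sig. x \<notin> L' \<longrightarrow> acc_prob M' x = 0"
    using assms(2) unfolding accepts_bpos_def by blast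
  have "acc_prob N x > c * c'" if "x \<in> lists Sig" "x \<in> L \<inter> L'" for x
  proof -
    have "c < acc_prob M x" "c' < acc_prob M' x"
      using c c' that by auto
    then have "c * c' < acc_prob M x * acc_prob M' x"
      using c(1) c'(1) by (intro mult_strict_mono) auto
    then show ?thesis using assms(3)[OF that(1)] by simp
  qed
  moreover have "acc_prob N x = 0" if "x \<in> lists Sig" "x \<notin> L \<inter> L'" for x
    using c c' that assms(3) by auto
  ultimately show ?thesis
    using c c' unfolding accepts_bpos_def by (intro exI[of _ "c * c'"]) auto
qed

theorem corollary4p9:
  fixes Sig :: "'a set" and M M' :: "'a mmqfa" and L L' :: "'a list set"
  assumes "finite Sig"
    and "L \<subseteq> lists Sig" and "L' \<subseteq> lists Sig"
    and "mmqfa_wf Sig M" and "end_decisive Sig M" and "accepts_bpos Sig M L"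
    and "mmqfa_wf Sig M'" and "end_decisive Sig M'" and "accepts_bpos Sig M' L'"
  shows "\<exists>N :: 'a mmqfa. mmqfa_wf Sig N \<and> end_decisive Sig N \<and>
           accepts_bpos Sig N (L \<inter> L')"
proof (intro exI conjI)
  show "mmqfa_wf Sig (tensor_mmqfa M M')"
    using assms(4,7) by (rule mmqfa_wf_tensor_mmqfa)
  show "end_decisive Sig (tensor_mmqfa M M')"
    using assms(4,7,5) by (rule end_decisive_tensor_mmqfa)
  show "accepts_bpos Sig (tensor_mmqfa M M') (L \<inter> L')"
    using assms(6,9) acc_prob_tensor_mmqfa[OF assms(4,7,5,8)] by (rule accepts_bpos_Int_if_acc_prob_mult)
qed

end
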